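(* Let $T$ be a map on $[0,1]$ and $\nu$ a $T$-invariant exponentially mixing probability measure. Let $h>0$ and $\epsilon>0$. For $n\in\mathbb N$, $N\le 2^n$ and distinct balls $B_1,\dots,B_N$ with $|B_i|=2^{-n}$ and $\nu(B_i)\ge2^{-n(h-\epsilon)}$ for all $i$, set $\mathcal C_{n,N,h}=\{x\in[0,1]:\exists\,1\le i\le N\text{ such that }\tau(x,B_i)\ge2^{nh}\}$. Then there exists an integer $n_h$, independent of $N$, such that for every $n\ge n_h$ (and every such choice of $N$ and balls), $\nu(\mathcal C_{n,N,h})\le2^{-n}$.
   Context: A $T$-invariant measure $\nu$ on $[0,1]$ is exponentially mixing if there exist constants $C>0$ and $0<\beta<1$ such that for every ball $A$, every Borel set $B$ and every $n\ge1$, $|\nu(A\cap T^{-n}B)-\nu(A)\nu(B)|\le C\beta^n\nu(B)$. $|B|$ denotes the diameter of $B$. For a ball $B$, the first hitting time is $\tau(x,B)=\inf\{n\ge1:T^nx\in B\}$, with $\tau(x,B)=\infty$ if no such $n$ exists. *)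

theory Defs
  imports "HOL-Probability.Probability"
begin

definition unit_ball :: "real set \<Rightarrow> bool" where
  "unit_ball A \<longleftrightarrow> (\<exists>c r. c \<in> {0..1} \<and> r > 0 \<and> A = ball c r \<inter> {0..1})"

text \<open>nu is a probability measure on [0,1] (a Borel probability on the reals concentrated on [0,1]),
  T is a Borel map of [0,1] into itself, and nu is T-invariant.\<close>
definition invariant_prob :: "(real \<Rightarrow> real) \<Rightarrow> real measure \<Rightarrow> bool" where
  "invariant_prob T \<nu> \<longleftrightarrow>
     prob_space \<nu> \<and> sets \<nu> = sets borel \<and> measure \<nu> {0..1} = 1 \<and>
     T \<in> borel_measurable borel \<and> T ` {0..1} \<subseteq> {0..1} \<and>
     (\<forall>B \<in> sets borel. measure \<nu> (T -` B) = measure \<nu> B)"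

definition exp_mixing :: "(real \<Rightarrow> real) \<Rightarrow> real measure \<Rightarrow> bool" where
  "exp_mixing T \<nu> \<longleftrightarrow>
     (\<exists>C \<beta>. C > 0 \<and> 0 < \<beta> \<and> \<beta> < 1 \<and>
        (\<forall>A B n. unit_ball A \<longrightarrow> B \<in> sets borel \<longrightarrow> n \<ge> 1 \<longrightarrow>
           \<bar>measure \<nu> (A \<inter> (T ^^ n) -` B) - measure \<nu> A * measure \<nu> B\<bar>
              \<le> C * \<beta> ^ n * measure \<nu> B))"

definition hitting_time :: "(real \<Rightarrow> real) \<Rightarrow> real set \<Rightarrow> real \<Rightarrow> ereal" where
  "hitting_time T B x =
     (if \<exists>n::nat. n \<ge> 1 \<and> (T ^^ n) x \<in> B
      then ereal (real (LEAST n::nat. n \<ge> 1 \<and> (T ^^ n) x \<in> B)) else \<infinity>)"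

definition C_set :: "(real \<Rightarrow> real) \<Rightarrow> nat \<Rightarrow> nat \<Rightarrow> real \<Rightarrow> (nat \<Rightarrow> real set) \<Rightarrow> real set" where
  "C_set T n N h B = {x \<in> {0..1}. \<exists>i \<in> {1..N}. hitting_time T (B i) x \<ge> ereal (2 powr (real n * h))}"

end

theory Submission
  imports Defs "HOL-Real_Asymp.Real_Asymp"
begin

(* If the hitting time of x to a ball B is at least 2^(nh) and m g < 2^(nh), then the orbit of x
   misses B at the sampling times g, 2g, ..., mg. By invariance and exponential mixing, every
   further sample multiplies the measure of this avoidance set by at most 1 - nu(B) + C beta^g.
   Take a < h with h - eps <= a, so that nu(B) >= p = 2^(-na). A gap g of order n gives
   C beta^g <= p/2, and m of order n 2^(na) samples give (1 - p/2)^m <= 2^(-2n). Then m g is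
   2^(na) times a polynomial in n, hence below 2^(nh) for large n, and a union bound over the
   N <= 2^n balls yields 2^(-n). *)

definition avoid_set :: "('a \<Rightarrow> 'a) \<Rightarrow> nat \<Rightarrow> 'a set \<Rightarrow> nat \<Rightarrow> 'a set" where
  "avoid_set T g B m = {x. \<forall>j \<in> {1..m}. (T ^^ (j * g)) x \<notin> B}"

lemma avoid_set_0 [simp]: "avoid_set T g B 0 = UNIV"
  by (simp add: avoid_set_def)

lemma avoid_set_Suc: "avoid_set T g B (Suc m) = (T ^^ g) -` (- B \<inter> avoid_set T g B m)"
proof -
  have shift: "(T ^^ (j * g)) ((T ^^ g) x) = (T ^^ (Suc j * g)) x" for j x
    by (simp only: mult_Suc add.commute[of g] funpow_add comp_apply)
  have ball_shift: "(\<forall>j \<in> {1..Suc m}. P j) \<longleftrightarrow> P 1 \<and> (\<forall>j \<in> {1..m}. P (Suc j))" for P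
    by (auto simp: Ball_def) (metis One_nat_def Suc_le_mono le_Suc_eq not0_implies_Suc le_zero_eq)
  show ?thesis
    unfolding avoid_set_def vimage_def ball_shift by (auto simp: shift)
qed

lemma sets_avoid_set:
  assumes "T \<in> borel \<rightarrow>\<^sub>M borel" "B \<in> sets borel"
  shows "avoid_set T g B m \<in> sets borel"
proof (induction m)
  case (Suc m)
  then show ?case
    unfolding avoid_set_Suc using assms measurable_sets[OF measurable_compose_n[OF assms(1)]] by auto
qed simp

lemma unit_ball_sets: "unit_ball A \<Longrightarrow> A \<in> sets borel"
  by (auto simp: unit_ball_def)

lemma measure_funpow_vimage:
  assumes "T \<in> borel \<rightarrow>\<^sub>M borel" "\<forall>A \<in> sets borel. measure M (T -` A) = measure M A"
    and "A \<in> sets borel"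
  shows "measure M ((T ^^ k) -` A) = measure M A"
proof (induction k)
  case (Suc k)
  have "(T ^^ k) -` A \<in> sets borel"
    using measurable_sets[OF measurable_compose_n[OF assms(1)] assms(3)] by simp
  have "measure M ((T ^^ Suc k) -` A) = measure M (T -` ((T ^^ k) -` A))"
    by (simp only: funpow_Suc_right vimage_comp)
  also have "\<dots> = measure M ((T ^^ k) -` A)"
    using assms(2) \<open>(T ^^ k) -` A \<in> sets borel\<close> by blast
  also have "\<dots> = measure M A"
    by (rule Suc.IH)
  finally show ?case .
qed simp

lemma measure_avoid_set_le:
  fixes T :: "'a::topological_space \<Rightarrow> 'a" and M :: "'a measure"
  assumes "prob_space M" and sets_M: "sets M = sets borel"
    and T: "T \<in> borel \<rightarrow>\<^sub>M borel" and inv: "\<forall>A \<in> sets borel. measure M (T -` A) = measure M A"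
    and B: "B \<in> sets borel"
    and mixing: "\<And>F. F \<in> sets borel \<Longrightarrow>
      \<bar>measure M (B \<inter> (T ^^ g) -` F) - measure M B * measure M F\<bar> \<le> \<delta> * measure M F"
  shows "measure M (avoid_set T g B m) \<le> (1 - measure M B + \<delta>) ^ m"
proof -
  interpret prob_space M by fact
  have space_M: "space M = UNIV"
    using sets_eq_imp_space_eq[OF sets_M] by simp
  have avoid_sets: "avoid_set T g B k \<in> sets borel" for k
    using sets_avoid_set[OF T B] .
  have "0 \<le> \<delta>"
    using mixing[of UNIV] prob_space space_M by simp
  then have q_nonneg: "0 \<le> 1 - measure M B + \<delta>"
    using prob_le_1[of B] by linarith
  have avoid_vimage: "\<exists>F \<in> sets borel. avoid_set T g B k = (T ^^ g) -` F" for k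
  proof (cases k)
    case 0
    then show ?thesis by (intro bexI[of _ UNIV]) auto
  next
    case (Suc k')
    then show ?thesis
      using avoid_sets[of k'] B
      by (intro bexI[of _ "- B \<inter> avoid_set T g B k'"]) (auto simp: avoid_set_Suc)
  qed
  have hits: "(measure M B - \<delta>) * measure M (avoid_set T g B k)
      \<le> measure M (avoid_set T g B k \<inter> B)" for k
  proof -
    obtain F where F: "F \<in> sets borel" "avoid_set T g B k = (T ^^ g) -` F"
      using avoid_vimage by blast
    have "measure M F = measure M (avoid_set T g B k)"
      using measure_funpow_vimage[OF T inv F(1)] F(2) by simp
    then show ?thesis
      using mixing[OF F(1)] F(2) by (simp add: abs_le_iff algebra_simps Int_commute)
  qed
  have step: "measure M (avoid_set T g B (Suc k))
      \<le> (1 - measure M B + \<delta>) * measure M (avoid_set T g B k)" for k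
  proof -
    have "measure M (avoid_set T g B (Suc k)) = measure M (avoid_set T g B k - B)"
      using measure_funpow_vimage[OF T inv, of "- B \<inter> avoid_set T g B k" g] avoid_sets B
      by (simp add: avoid_set_Suc Diff_eq Int_commute)
    also have "\<dots> = measure M (avoid_set T g B k) - measure M (avoid_set T g B k \<inter> B)"
      using avoid_sets B sets_M by (simp add: finite_measure_Diff')
    also have "\<dots> \<le> (1 - measure M B + \<delta>) * measure M (avoid_set T g B k)"
      using hits[of k] by (simp add: algebra_simps)
    finally show ?thesis .
  qed
  show ?thesis
  proof (induction m)
    case 0
    then show ?case by (simp add: prob_le_1)
  next
    case (Suc m)
    then show ?case
      using step[of m] q_nonneg by (simp add: mult_left_mono order_trans)
  qed
qed

lemma hitting_time_le:
  assumes "1 \<le> k" "(T ^^ k) x \<in> B"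
  shows "hitting_time T B x \<le> ereal (real k)"
proof -
  have "(LEAST n. 1 \<le> n \<and> (T ^^ n) x \<in> B) \<le> k"
    using assms by (intro Least_le) simp
  then show ?thesis
    using assms unfolding hitting_time_def by auto
qed

lemma avoid_set_if_hitting_time_ge:
  assumes "ereal K \<le> hitting_time T B x" "real (m * g) < K" "1 \<le> g"
  shows "x \<in> avoid_set T g B m"
proof -
  have "(T ^^ (j * g)) x \<notin> B" if j: "j \<in> {1..m}" for j
  proof
    assume "(T ^^ (j * g)) x \<in> B"
    moreover have "1 \<le> j * g"
      using j assms(3) by simp
    ultimately have "hitting_time T B x \<le> ereal (real (j * g))"
      by (rule hitting_time_le[rotated])
    also have "real (j * g) < K"
      using j assms(2) by (meson atLeastAtMost_iff mult_le_mono1 of_nat_le_iff order.strict_trans1)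
    finally show False
      using assms(1) by simp
  qed
  then show ?thesis
    by (simp add: avoid_set_def)
qed

lemma exists_power_le:
  fixes \<beta> t :: real
  assumes "0 < \<beta>" "\<beta> < 1" "0 < t"
  shows "\<exists>g::nat. 1 \<le> g \<and> \<beta> ^ g \<le> t \<and> real g \<le> \<bar>ln t / ln \<beta>\<bar> + 2"
proof -
  define g where "g = nat \<lceil>ln t / ln \<beta>\<rceil> + 1"
  have "ln \<beta> < 0"
    using assms by simp
  have "ln t / ln \<beta> \<le> real g"
    unfolding g_def by linarith
  then have "ln (\<beta> ^ g) \<le> ln t"
    using \<open>ln \<beta> < 0\<close> assms(1) by (simp add: ln_realpow neg_divide_le_eq)
  then have "\<beta> ^ g \<le> t"
    using assms by simp
  moreover have "real g \<le> \<bar>ln t / ln \<beta>\<bar> + 2"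
    unfolding g_def by linarith
  ultimately show ?thesis
    unfolding g_def by auto
qed

lemma exists_one_minus_power_le:
  fixes q s :: real
  assumes "0 < q" "q \<le> 1" "0 < s" "s \<le> 1"
  shows "\<exists>m::nat. (1 - q) ^ m \<le> s \<and> real m \<le> - ln s / q + 1"
proof -
  define m where "m = nat \<lceil>- ln s / q\<rceil>"
  have "ln s \<le> 0"
    using assms by simp
  then have "0 \<le> - ln s / q"
    using assms(1) by (simp add: divide_nonpos_pos)
  then have m_bounds: "- ln s / q \<le> real m" "real m \<le> - ln s / q + 1"
    unfolding m_def by linarith+
  have "(1 - q) ^ m \<le> exp (- q) ^ m"
    using assms exp_ge_add_one_self[of "- q"] by (intro power_mono) auto
  also have "\<dots> = exp (- (q * real m))"
    by (simp add: exp_of_nat_mult[symmetric] mult.commute)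
  also have "\<dots> \<le> exp (ln s)"
    using m_bounds(1) unfolding pos_divide_le_eq[OF assms(1)] by (simp add: mult.commute)
  also have "\<dots> = s"
    using assms by simp
  finally show ?thesis
    using m_bounds(2) by blast
qed

lemma exists_mult_power_le_two_powr:
  fixes C \<beta> x :: real
  assumes "0 < C" "0 < \<beta>" "\<beta> < 1" "0 \<le> x"
  shows "\<exists>g::nat. 1 \<le> g \<and> C * \<beta> ^ g \<le> 2 powr (- x) / 2
           \<and> real g \<le> (x * ln 2 + \<bar>ln (2 * C)\<bar>) / - ln \<beta> + 2"
proof -
  define t where "t = 2 powr (- x) / (2 * C)"
  obtain g where g: "1 \<le> g" "\<beta> ^ g \<le> t" "real g \<le> \<bar>ln t / ln \<beta>\<bar> + 2"
    using exists_power_le[of \<beta> t] assms by (auto simp: t_def)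
  have "ln \<beta> < 0"
    using assms by simp
  have "ln t = - (x * ln 2) - ln (2 * C)"
    using assms(1) by (simp add: t_def ln_div ln_powr)
  then have "\<bar>ln t\<bar> \<le> \<bar>- (x * ln 2)\<bar> + \<bar>ln (2 * C)\<bar>"
    by (simp only: abs_triangle_ineq4)
  then have "\<bar>ln t\<bar> / - ln \<beta> \<le> (x * ln 2 + \<bar>ln (2 * C)\<bar>) / - ln \<beta>"
    using \<open>ln \<beta> < 0\<close> assms(4) by (intro divide_right_mono) auto
  moreover have "\<bar>ln t / ln \<beta>\<bar> = \<bar>ln t\<bar> / - ln \<beta>"
    using \<open>ln \<beta> < 0\<close> by (simp add: abs_divide)
  moreover have "C * \<beta> ^ g \<le> 2 powr (- x) / 2"
    using g(2) assms(1) by (simp add: t_def field_simps)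
  ultimately show ?thesis
    using g(1,3) by (intro exI[of _ g]) auto
qed

lemma exists_one_minus_power_le_two_powr:
  fixes x y :: real
  assumes "0 \<le> x" "0 \<le> y"
  shows "\<exists>m::nat. (1 - 2 powr (- x) / 2) ^ m \<le> 2 powr (- y) \<and> real m \<le> 2 * y * ln 2 * 2 powr x + 1"
proof -
  have "2 powr (- x) \<le> 1" "2 powr (- y) \<le> 1"
    using assms powr_mono[of "- x" 0 2] powr_mono[of "- y" 0 2] by auto
  then obtain m where m: "(1 - 2 powr (- x) / 2) ^ m \<le> 2 powr (- y)"
    "real m \<le> - ln (2 powr (- y)) / (2 powr (- x) / 2) + 1"
    using exists_one_minus_power_le[of "2 powr (- x) / 2" "2 powr (- y)"] by auto
  have "2 powr (- x) * 2 powr x = 1" "ln (2 powr (- y)) = - y * ln 2"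
    by (simp_all add: powr_add[symmetric] ln_powr)
  then have "- ln (2 powr (- y)) / (2 powr (- x) / 2) = 2 * y * ln 2 * 2 powr x"
    by (simp add: field_simps)
  then show ?thesis
    using m by auto
qed

lemma eventually_mixing_schedule:
  fixes C \<beta> a h :: real
  assumes "0 < C" "0 < \<beta>" "\<beta> < 1" "0 < a" "a < h"
  shows "\<forall>\<^sub>F n in sequentially. \<exists>g m. 1 \<le> g \<and> C * \<beta> ^ g \<le> 2 powr (- (real n * a)) / 2 \<and>
           (1 - 2 powr (- (real n * a)) / 2) ^ m \<le> 2 powr (- (2 * real n)) \<and> real (m * g) < 2 powr (real n * h)"
proof -
  have "\<forall>\<^sub>F n in sequentially. (2 * (2 * real n) * ln 2 * 2 powr (real n * a) + 1)
          * ((real n * a * ln 2 + \<bar>ln (2 * C)\<bar>) / - ln \<beta> + 2) < 2 powr (real n * h)"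
    using assms by real_asymp
  then show ?thesis
  proof (rule eventually_mono)
    fix n :: nat
    assume bound: "(2 * (2 * real n) * ln 2 * 2 powr (real n * a) + 1)
          * ((real n * a * ln 2 + \<bar>ln (2 * C)\<bar>) / - ln \<beta> + 2) < 2 powr (real n * h)"
    obtain g where g: "1 \<le> g" "C * \<beta> ^ g \<le> 2 powr (- (real n * a)) / 2"
      "real g \<le> (real n * a * ln 2 + \<bar>ln (2 * C)\<bar>) / - ln \<beta> + 2"
      using exists_mult_power_le_two_powr[of C \<beta> "real n * a"] assms by auto
    obtain m where m: "(1 - 2 powr (- (real n * a)) / 2) ^ m \<le> 2 powr (- (2 * real n))"
      "real m \<le> 2 * (2 * real n) * ln 2 * 2 powr (real n * a) + 1"
      using exists_one_minus_power_le_two_powr[of "real n * a" "2 * real n"] assms by auto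
    have "real (m * g) < 2 powr (real n * h)"
      using mult_mono[OF m(2) g(3)] bound by simp
    then show "\<exists>g m. 1 \<le> g \<and> C * \<beta> ^ g \<le> 2 powr (- (real n * a)) / 2 \<and>
           (1 - 2 powr (- (real n * a)) / 2) ^ m \<le> 2 powr (- (2 * real n)) \<and> real (m * g) < 2 powr (real n * h)"
      using g m(1) by blast
  qed
qed

lemma measure_C_set_le:
  fixes T :: "real \<Rightarrow> real"
  assumes "invariant_prob T \<nu>"
    and mixing: "\<And>A F. unit_ball A \<Longrightarrow> F \<in> sets borel \<Longrightarrow>
      \<bar>measure \<nu> (A \<inter> (T ^^ g) -` F) - measure \<nu> A * measure \<nu> F\<bar> \<le> \<delta> * measure \<nu> F"
    and g: "1 \<le> g" and \<delta>: "\<delta> \<le> p / 2" and mg: "real (m * g) < 2 powr (real n * h)"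
    and balls: "\<forall>i \<in> {1..N}. unit_ball (B i) \<and> p \<le> measure \<nu> (B i)"
  shows "measure \<nu> (C_set T n N h B) \<le> real N * (1 - p / 2) ^ m"
proof -
  have prob: "prob_space \<nu>" and sets: "sets \<nu> = sets borel" and T: "T \<in> borel \<rightarrow>\<^sub>M borel"
    and inv: "\<forall>A \<in> sets borel. measure \<nu> (T -` A) = measure \<nu> A"
    using assms(1) unfolding invariant_prob_def by auto
  interpret prob_space \<nu> by (fact prob)
  have avoid_sets: "avoid_set T g (B i) m \<in> sets \<nu>" if "i \<in> {1..N}" for i
    using sets_avoid_set[OF T unit_ball_sets] balls that sets by auto
  have avoid_le: "measure \<nu> (avoid_set T g (B i) m) \<le> (1 - p / 2) ^ m" if "i \<in> {1..N}" for i
  proof -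
    have ball: "unit_ball (B i)" and "p \<le> measure \<nu> (B i)"
      using balls that by auto
    have "space \<nu> = UNIV"
      using sets_eq_imp_space_eq[OF sets] by simp
    then have "0 \<le> \<delta>"
      using mixing[OF ball, of UNIV] prob_space by simp
    have "measure \<nu> (avoid_set T g (B i) m) \<le> (1 - measure \<nu> (B i) + \<delta>) ^ m"
      by (rule measure_avoid_set_le[OF prob sets T inv unit_ball_sets[OF ball] mixing[OF ball]])
    also have "\<dots> \<le> (1 - p / 2) ^ m"
      using \<open>p \<le> measure \<nu> (B i)\<close> \<open>0 \<le> \<delta>\<close> \<delta> prob_le_1[of "B i"] by (intro power_mono) auto
    finally show ?thesis .
  qed
  have "C_set T n N h B \<subseteq> (\<Union>i \<in> {1..N}. avoid_set T g (B i) m)"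
    using avoid_set_if_hitting_time_ge[OF _ mg g] unfolding C_set_def by blast
  then have "measure \<nu> (C_set T n N h B) \<le> measure \<nu> (\<Union>i \<in> {1..N}. avoid_set T g (B i) m)"
    using avoid_sets by (intro finite_measure_mono) auto
  also have "\<dots> \<le> (\<Sum>i \<in> {1..N}. measure \<nu> (avoid_set T g (B i) m))"
    using avoid_sets by (intro measure_UNION_le) auto
  also have "\<dots> \<le> (\<Sum>i \<in> {1..N}. (1 - p / 2) ^ m)"
    by (intro sum_mono avoid_le)
  finally show ?thesis
    by simp
qed

theorem lemma5p3:
  fixes T :: "real \<Rightarrow> real" and \<nu> :: "real measure" and h \<epsilon> :: real
  assumes "invariant_prob T \<nu>" and "exp_mixing T \<nu>" and "h > 0" and "\<epsilon> > 0"
  shows "\<exists>n\<^sub>h::nat. \<forall>n N (B :: nat \<Rightarrow> real set). n \<ge> n\<^sub>h \<longrightarrow> N \<le> 2 ^ n \<longrightarrow>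
           inj_on B {1..N} \<longrightarrow>
           (\<forall>i \<in> {1..N}. unit_ball (B i) \<and> diameter (B i) = 2 powr (- real n)
                         \<and> measure \<nu> (B i) \<ge> 2 powr (- real n * (h - \<epsilon>))) \<longrightarrow>
           measure \<nu> (C_set T n N h B) \<le> 2 powr (- real n)"
proof -
  obtain C \<beta> where C: "0 < C" "0 < \<beta>" "\<beta> < 1" and mixing:
    "\<And>A F g. unit_ball A \<Longrightarrow> F \<in> sets borel \<Longrightarrow> 1 \<le> g \<Longrightarrow>
       \<bar>measure \<nu> (A \<inter> (T ^^ g) -` F) - measure \<nu> A * measure \<nu> F\<bar> \<le> C * \<beta> ^ g * measure \<nu> F"
    using assms(2) unfolding exp_mixing_def by blast
  define a where "a = max (h - \<epsilon>) (h / 2)" \<comment> \<open>\<open>\<epsilon>\<close> may exceed \<open>h\<close>\<close>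
  have "0 < a" "a < h"
    using assms(3,4) by (auto simp: a_def)
  have "\<forall>\<^sub>F n in sequentially. \<forall>N B. N \<le> 2 ^ n \<longrightarrow>
          (\<forall>i \<in> {1..N}. unit_ball (B i) \<and> 2 powr (- real n * (h - \<epsilon>)) \<le> measure \<nu> (B i)) \<longrightarrow>
          measure \<nu> (C_set T n N h B) \<le> 2 powr (- real n)"
    using eventually_mixing_schedule[OF C \<open>0 < a\<close> \<open>a < h\<close>]
  proof (rule eventually_mono, safe)
    fix n N g m and B :: "nat \<Rightarrow> real set"
    assume g: "1 \<le> g" "C * \<beta> ^ g \<le> 2 powr (- (real n * a)) / 2"
      and m: "(1 - 2 powr (- (real n * a)) / 2) ^ m \<le> 2 powr (- (2 * real n))"
      and mg: "real (m * g) < 2 powr (real n * h)" and N: "N \<le> 2 ^ n"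
      and balls: "\<forall>i \<in> {1..N}. unit_ball (B i) \<and> 2 powr (- real n * (h - \<epsilon>)) \<le> measure \<nu> (B i)"
    have "real n * (h - \<epsilon>) \<le> real n * a"
      by (intro mult_left_mono) (auto simp: a_def)
    then have "2 powr (- (real n * a)) \<le> 2 powr (- real n * (h - \<epsilon>))"
      by (intro powr_mono) auto
    with balls have "\<forall>i \<in> {1..N}. unit_ball (B i) \<and> 2 powr (- (real n * a)) \<le> measure \<nu> (B i)"
      by (blast intro: order_trans)
    from measure_C_set_le[OF assms(1) mixing[OF _ _ g(1)] g mg this]
    have "measure \<nu> (C_set T n N h B) \<le> real N * (1 - 2 powr (- (real n * a)) / 2) ^ m" .
    also have "\<dots> \<le> 2 powr real n * 2 powr (- (2 * real n))"
      using N m powr_mono[of "- (real n * a)" 0 2] \<open>0 < a\<close>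
      by (intro mult_mono) (auto simp: powr_realpow)
    also have "\<dots> = 2 powr (- real n)"
      by (simp add: powr_add[symmetric])
    finally show "measure \<nu> (C_set T n N h B) \<le> 2 powr (- real n)" .
  qed
  then show ?thesis
    unfolding eventually_sequentially by blast
qed

end
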